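(* Consider the single-hop VAoI system described in the context with maximum average update rate $\alpha\in(0,1]$. The threshold-based policy minimizing the average VAoI subject to the rate constraint $\lim_{T\to\infty}\frac1T\mathbb{E}\big[\sum_{t=0}^{T-1}a(t)\big]\le\alpha$ is a randomized mixture of the two threshold policies with thresholds $\Delta_T^\ast$ and $\Delta_T^\ast-1$, applied with probabilities $\gamma$ and $1-\gamma$ respectively, where \[ \Delta_T^\ast=\left\lceil \frac{p_g}{p_s}\Big(\frac1\alpha-1+p_s\Big)\right\rceil,\qquad \gamma=\frac{R(\Delta_T^\ast-1)-\alpha}{R(\Delta_T^\ast-1)-R(\Delta_T^\ast)}, \] with $R(\Delta_T)=\dfrac{p_g}{(\Delta_T-1)p_s+\beta}$ for $\Delta_T\ge1$, $R(0)=1$, and $\beta=1-(1-p_s)(1-p_g)$.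
   Context: Time is slotted, $t\in\{0,1,2,\dots\}$. An information source generates a new version in each slot independently with probability $p_g$; let $G_t\in\{0,1\}$ indicate whether a new version is generated in slot $t$. A transmitter holding the current source version may, in each slot $t$, attempt to send it to a receiver over an erasure channel; $a(t)\in\{0,1\}$ indicates an attempt, and each attempt succeeds independently with probability $p_s$. The Version Age of Information (VAoI) $\Delta(t)$ evolves as $\Delta(t+1)=G_t$ if $a(t)=1$ and the attempt succeeds, and $\Delta(t+1)=\Delta(t)+G_t$ otherwise. All version-generation and channel events are mutually independent. Assume $0<p_s<1$, $0<p_g<1$. The average VAoI of a policy is $\lim_{T\to\infty}\frac1T\mathbb{E}[\sum_{t=0}^{T-1}\Delta(t)]$. A threshold policy with threshold $\Delta_T\in\{0,1,2,\dots\}$ sets $a(t)=1$ iff $\Delta(t)\ge\Delta_T$; its long-run transmission rate is $R(\Delta_T)$, the stationary probability that $\Delta\ge\Delta_T$. A randomized mixture of threshold policies with thresholds $\Delta_T^\ast$ and $\Delta_T^\ast-1$ with probabilities $\gamma$ and $1-\gamma$ is a policy whose average transmission rate is $\gamma R(\Delta_T^\ast)+(1-\gamma)R(\Delta_T^\ast-1)$ and whose average VAoI is $\gamma\bar\Delta_{(\Delta_T^\ast)}+(1-\gamma)\bar\Delta_{(\Delta_T^\ast-1)}$, where $\bar\Delta_{(\Delta_T)}$ denotes the average VAoI of the threshold policy with threshold $\Delta_T$. *)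

theory Defs
  imports "HOL-Probability.Probability"
begin

definition vaoi_step :: "real \<Rightarrow> real \<Rightarrow> nat \<Rightarrow> nat \<Rightarrow> nat pmf" where
  "vaoi_step ps pg thr d =
     (if thr \<le> d then
        bind_pmf (bernoulli_pmf ps) (\<lambda>s. bind_pmf (bernoulli_pmf pg) (\<lambda>g.
          return_pmf (if s then of_bool g else d + of_bool g)))
      else map_pmf (\<lambda>g. d + of_bool g) (bernoulli_pmf pg))"

primrec vaoi_dist :: "real \<Rightarrow> real \<Rightarrow> nat \<Rightarrow> nat \<Rightarrow> nat \<Rightarrow> nat pmf" where
  "vaoi_dist ps pg thr d0 0 = return_pmf d0"
| "vaoi_dist ps pg thr d0 (Suc t) = bind_pmf (vaoi_dist ps pg thr d0 t) (vaoi_step ps pg thr)"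

text \<open>Finite-horizon averages (1/T) E[sum_{t<T} a(t)] and (1/T) E[sum_{t<T} \<Delta>(t)].\<close>
definition rate_avg :: "real \<Rightarrow> real \<Rightarrow> nat \<Rightarrow> nat \<Rightarrow> nat \<Rightarrow> real" where
  "rate_avg ps pg thr d0 T =
     (\<Sum>t<T. measure_pmf.prob (vaoi_dist ps pg thr d0 t) {d. thr \<le> d}) / real T"

definition vaoi_avg :: "real \<Rightarrow> real \<Rightarrow> nat \<Rightarrow> nat \<Rightarrow> nat \<Rightarrow> real" where
  "vaoi_avg ps pg thr d0 T =
     (\<Sum>t<T. measure_pmf.expectation (vaoi_dist ps pg thr d0 t) real) / real T"

definition thr_rate :: "real \<Rightarrow> real \<Rightarrow> nat \<Rightarrow> nat \<Rightarrow> real" where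
  "thr_rate ps pg thr d0 = lim (rate_avg ps pg thr d0)"

definition thr_vaoi :: "real \<Rightarrow> real \<Rightarrow> nat \<Rightarrow> nat \<Rightarrow> real" where
  "thr_vaoi ps pg thr d0 = lim (vaoi_avg ps pg thr d0)"

end

theory Submission
  imports Defs
begin

(*
  Under a threshold policy with threshold k the VAoI is a Markov chain.  Its long-run averages
  are computed from solutions of the Poisson equation E[g(next state) | d] = g d + c - a d:
  telescoping gives sum_{t<T} E a(Delta t) = T c + E g(Delta 0) - E g(Delta T), so if E g(Delta t)
  stays bounded, the time average of a tends to c.  This yields the rate
  R k = pg / (ps k + pg (1 - ps)) and the average VAoI
  V k = pg / ps + ps k (k - 1) / (2 (ps k + pg (1 - ps))).

  R is strictly decreasing and, for k >= 1, V k = A / R k + B + C R k with A >= 0, a convex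
  function of the rate.  Hence every point (R k, V k) lies on or above the line through the
  points of the consecutive thresholds D and D - 1 with R D <= alpha <= R (D - 1), and this line has
  nonpositive slope.  Averaging, any mixture with rate at most alpha has VAoI at least the value
  of the line at alpha, which is attained by the gamma-mixture of D and D - 1.
*)

lemma expectation_bind_pmf_finite:
  fixes f :: "'b \<Rightarrow> real"
  assumes "finite (set_pmf M)" "\<And>x. x \<in> set_pmf M \<Longrightarrow> finite (set_pmf (K x))"
  shows "measure_pmf.expectation (M \<bind> K) f =
    measure_pmf.expectation M (\<lambda>x. measure_pmf.expectation (K x) f)"
proof -
  have "measure_pmf.expectation (M \<bind> K) f =
      (\<Sum>x\<in>set_pmf M. pmf M x *\<^sub>R measure_pmf.expectation (K x) f)"
    using assms by (intro pmf_expectation_bind) auto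
  also have "\<dots> = measure_pmf.expectation M (\<lambda>x. measure_pmf.expectation (K x) f)"
    using assms(1) by (intro integral_measure_pmf[symmetric]) auto
  finally show ?thesis .
qed

lemma abs_expectation_le:
  fixes f :: "'a \<Rightarrow> real"
  assumes "finite (set_pmf M)" "\<And>x. \<bar>f x\<bar> \<le> C"
  shows "\<bar>measure_pmf.expectation M f\<bar> \<le> C"
proof -
  have "\<bar>measure_pmf.expectation M f\<bar> \<le> measure_pmf.expectation M (\<lambda>x. \<bar>f x\<bar>)"
    using integral_norm_bound[of M f] by simp
  also have "\<dots> \<le> C"
    using assms by (intro measure_pmf.integral_le_const) (auto simp: integrable_measure_pmf_finite)
  finally show ?thesis .
qed

lemma finite_set_pmf_vaoi_step: "finite (set_pmf (vaoi_step ps pg k d))"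
  unfolding vaoi_step_def by (auto simp: finite intro!: finite_UN_I)

lemma finite_set_pmf_vaoi_dist: "finite (set_pmf (vaoi_dist ps pg k d0 t))"
  by (induction t) (auto simp: finite_set_pmf_vaoi_step intro!: finite_UN_I)

lemma expectation_vaoi_step:
  fixes f :: "nat \<Rightarrow> real"
  assumes "0 \<le> ps" "ps \<le> 1" "0 \<le> pg" "pg \<le> 1"
  shows "measure_pmf.expectation (vaoi_step ps pg k d) f =
    (if k \<le> d then ps * (pg * f 1 + (1 - pg) * f 0) + (1 - ps) * (pg * f (d + 1) + (1 - pg) * f d)
     else pg * f (d + 1) + (1 - pg) * f d)"
  using assms by (simp add: vaoi_step_def expectation_bind_pmf_finite finite algebra_simps)

lemma tendsto_ratio_of_bounded_deviation:
  fixes S :: "nat \<Rightarrow> real"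
  assumes "\<And>T. \<bar>S T - real T * c\<bar> \<le> C"
  shows "(\<lambda>T. S T / real T) \<longlonglongrightarrow> c"
proof -
  have "(\<lambda>T. (S T - real T * c) / real T) \<longlonglongrightarrow> 0"
  proof (rule Lim_null_comparison)
    show "\<forall>\<^sub>F T in sequentially. norm ((S T - real T * c) / real T) \<le> C / real T"
      using assms by (simp add: abs_divide divide_right_mono)
  qed (rule lim_const_over_n)
  then have "(\<lambda>T. c + (S T - real T * c) / real T) \<longlonglongrightarrow> c"
    using tendsto_add[OF tendsto_const] by fastforce
  moreover have "\<forall>\<^sub>F T in sequentially. c + (S T - real T * c) / real T = S T / real T"
    by (intro eventually_sequentiallyI[of 1]) (simp add: field_simps)
  ultimately show ?thesis
    by (rule Lim_transform_eventually)
qed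

lemma average_expectation_tendsto_if_poisson:
  fixes \<mu> :: "nat \<Rightarrow> 'a pmf" and K :: "'a \<Rightarrow> 'a pmf" and a g :: "'a \<Rightarrow> real"
  assumes chain: "\<And>t. \<mu> (Suc t) = \<mu> t \<bind> K"
    and finite: "\<And>t. finite (set_pmf (\<mu> t))" "\<And>x. finite (set_pmf (K x))"
    and poisson: "\<And>x. measure_pmf.expectation (K x) g = g x + c - a x"
    and bounded: "\<And>t. \<bar>measure_pmf.expectation (\<mu> t) g\<bar> \<le> C"
  shows "(\<lambda>T. (\<Sum>t<T. measure_pmf.expectation (\<mu> t) a) / real T) \<longlonglongrightarrow> c"
proof (rule tendsto_ratio_of_bounded_deviation)
  let ?E = "\<lambda>t f. measure_pmf.expectation (\<mu> t) f"
  have telescope: "(\<Sum>t<T. ?E t a) = real T * c + ?E 0 g - ?E T g" for T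
  proof (induction T)
    case (Suc T)
    have "?E (Suc T) g = ?E T (\<lambda>x. g x + c - a x)"
      by (simp add: chain expectation_bind_pmf_finite finite poisson)
    also have "\<dots> = ?E T g + c - ?E T a"
      by (simp add: integrable_measure_pmf_finite finite)
    finally show ?case
      using Suc by (simp add: algebra_simps)
  qed simp
  show "\<bar>(\<Sum>t<T. ?E t a) - real T * c\<bar> \<le> 2 * C" for T
    using bounded[of 0] bounded[of T] by (simp add: telescope)
qed

definition stationary_rate :: "real \<Rightarrow> real \<Rightarrow> nat \<Rightarrow> real" where
  "stationary_rate ps pg k = (if k = 0 then 1 else pg / (ps * real k + pg * (1 - ps)))"

definition stationary_vaoi :: "real \<Rightarrow> real \<Rightarrow> nat \<Rightarrow> real" where
  "stationary_vaoi ps pg k =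
     pg / ps + ps * real k * (real k - 1) / (2 * (ps * real k + pg * (1 - ps)))"

lemma rate_avg_tendsto:
  assumes "0 < ps" "ps < 1" "0 < pg" "pg < 1"
  shows "rate_avg ps pg k d0 \<longlonglongrightarrow> stationary_rate ps pg k"
proof -
  define b where "b = ps * real k + pg * (1 - ps)"
  have "0 < b"
    using assms by (simp add: b_def add_nonneg_pos)
  define g where "g = (\<lambda>d. if k = 0 then 0 else real (min d k) / b)"
  have rate: "stationary_rate ps pg k = (if k = 0 then 1 else pg / b)"
    by (simp add: stationary_rate_def b_def)
  have poisson: "measure_pmf.expectation (vaoi_step ps pg k d) g =
      g d + stationary_rate ps pg k - indicator {d. k \<le> d} d" for d
  proof (cases "k = 0")
    case False
    have "ps * pg + (1 - ps) * real k = real k + pg - b"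
      by (simp add: b_def algebra_simps)
    with False show ?thesis
      using assms \<open>0 < b\<close>
      by (cases "k \<le> d") (simp_all add: expectation_vaoi_step g_def rate field_simps)
  qed (use assms in \<open>simp add: expectation_vaoi_step g_def stationary_rate_def\<close>)
  have "\<bar>g d\<bar> \<le> real k / b" for d
    using \<open>0 < b\<close> by (simp add: g_def divide_right_mono)
  then have "(\<lambda>T. (\<Sum>t<T. measure_pmf.expectation (vaoi_dist ps pg k d0 t) (indicator {d. k \<le> d}))
      / real T) \<longlonglongrightarrow> stationary_rate ps pg k"
    by (intro average_expectation_tendsto_if_poisson[OF _ _ _ poisson] abs_expectation_le)
       (simp_all add: finite_set_pmf_vaoi_dist finite_set_pmf_vaoi_step)
  then show ?thesis
    unfolding rate_avg_def by simp
qed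

lemma expectation_vaoi_dist_le:
  assumes "0 < ps" "ps < 1" "0 < pg" "pg < 1"
  shows "measure_pmf.expectation (vaoi_dist ps pg k d0 t) real
    \<le> max (real d0) ((pg + ps * real k) / ps)"
proof (induction t)
  case (Suc t)
  let ?M = "max (real d0) ((pg + ps * real k) / ps)"
  let ?E = "measure_pmf.expectation (vaoi_dist ps pg k d0 t)"
  have drift: "measure_pmf.expectation (vaoi_step ps pg k d) real \<le> (1 - ps) * real d + (pg + ps * real k)"
    for d
    using assms by (cases "k \<le> d") (simp_all add: expectation_vaoi_step algebra_simps)
  have "measure_pmf.expectation (vaoi_dist ps pg k d0 (Suc t)) real
      \<le> ?E (\<lambda>d. (1 - ps) * real d + (pg + ps * real k))"
    unfolding vaoi_dist.simps
    by (subst expectation_bind_pmf_finite, simp_all add: finite_set_pmf_vaoi_dist finite_set_pmf_vaoi_step)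
       (rule integral_mono; simp add: integrable_measure_pmf_finite finite_set_pmf_vaoi_dist drift)
  also have "\<dots> = (1 - ps) * ?E real + (pg + ps * real k)"
    by (simp add: integrable_measure_pmf_finite finite_set_pmf_vaoi_dist)
  also have "\<dots> \<le> (1 - ps) * ?M + ps * ?M"
  proof (rule add_mono)
    show "(1 - ps) * ?E real \<le> (1 - ps) * ?M"
      using Suc assms by (simp add: mult_left_mono)
    show "pg + ps * real k \<le> ps * ?M"
      using assms by (simp add: max_def field_simps)
  qed
  also have "\<dots> = ?M"
    by (simp add: algebra_simps)
  finally show ?case .
qed simp

lemma vaoi_avg_tendsto:
  assumes "0 < ps" "ps < 1" "0 < pg" "pg < 1"
  shows "vaoi_avg ps pg k d0 \<longlonglongrightarrow> stationary_vaoi ps pg k"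
proof -
  define b where "b = ps * real k + pg * (1 - ps)"
  define z where "z = ps * real k * (real k - 1) / (2 * b)"
  have "0 < b"
    using assms by (simp add: b_def add_nonneg_pos)
  have V: "stationary_vaoi ps pg k = pg / ps + z"
    by (simp add: stationary_vaoi_def z_def b_def)
  \<comment> \<open>\<open>\<psi>\<close> is a relative value function for the cost \<open>real d\<close>: above the threshold each slot
    costs \<open>d\<close> and the age resets after a geometric number of slots with mean \<open>1 / ps\<close>; below it
    \<open>h\<close> has increments \<open>(z - j) / pg\<close>.\<close>
  define h where "h = (\<lambda>j::nat. (real j * z - real j * (real j - 1) / 2) / pg)"
  define \<psi> where "\<psi> = (\<lambda>d. real d / ps + h (min d k))"
  have poisson:
    "measure_pmf.expectation (vaoi_step ps pg k d) \<psi> = \<psi> d + stationary_vaoi ps pg k - real d" for d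
  proof (cases "k \<le> d")
    case True
    have "ps * (z - h k) * pg = z * pg - z * b + ps * real k * (real k - 1) / 2"
      using assms by (simp add: h_def b_def field_simps)
    also have "\<dots> = z * pg"
      using \<open>0 < b\<close> by (simp add: z_def)
    finally have "ps * (z - h k) = z"
      using assms by simp
    then have hk: "h k = z - z / ps"
      using assms by (simp add: field_simps)
    have \<psi>_values: "\<psi> 0 = 0" "\<psi> 1 = 1 / ps + z / pg"
      by (cases "k = 0"; simp add: \<psi>_def h_def z_def)+
    have \<psi>_above: "\<psi> (d + 1) = (real d + 1) / ps + z - z / ps" "\<psi> d = real d / ps + z - z / ps"
      using True by (simp_all add: \<psi>_def hk)
    have "measure_pmf.expectation (vaoi_step ps pg k d) \<psi> =
        ps * (pg * \<psi> 1 + (1 - pg) * \<psi> 0) + (1 - ps) * (pg * \<psi> (d + 1) + (1 - pg) * \<psi> d)"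
      using True assms by (simp add: expectation_vaoi_step)
    also have "\<dots> = \<psi> d + stationary_vaoi ps pg k - real d"
      unfolding \<psi>_values \<psi>_above V using assms by (simp add: field_simps)
    finally show ?thesis .
  next
    case False
    then show ?thesis
      using assms by (simp add: expectation_vaoi_step \<psi>_def V h_def field_simps)
  qed
  define H where "H = (\<Sum>j\<le>k. \<bar>h j\<bar>)"
  define M where "M = max (real d0) ((pg + ps * real k) / ps)"
  have "\<bar>measure_pmf.expectation (vaoi_dist ps pg k d0 t) \<psi>\<bar> \<le> M / ps + H" for t
  proof -
    let ?E = "measure_pmf.expectation (vaoi_dist ps pg k d0 t)"
    have "?E \<psi> = ?E real / ps + ?E (\<lambda>d. h (min d k))"
      by (simp add: \<psi>_def integrable_measure_pmf_finite finite_set_pmf_vaoi_dist)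
    moreover have "0 \<le> ?E real / ps" "?E real / ps \<le> M / ps"
      using expectation_vaoi_dist_le[OF assms] assms by (auto simp: M_def divide_right_mono)
    moreover have "\<bar>?E (\<lambda>d. h (min d k))\<bar> \<le> H"
      unfolding H_def
      by (intro abs_expectation_le finite_set_pmf_vaoi_dist
          member_le_sum[where f = "\<lambda>j. \<bar>h j\<bar>"]) auto
    ultimately show ?thesis
      by linarith
  qed
  then have "(\<lambda>T. (\<Sum>t<T. measure_pmf.expectation (vaoi_dist ps pg k d0 t) real) / real T)
      \<longlonglongrightarrow> stationary_vaoi ps pg k"
    by (intro average_expectation_tendsto_if_poisson[OF _ _ _ poisson])
       (simp_all add: finite_set_pmf_vaoi_dist finite_set_pmf_vaoi_step)
  then show ?thesis
    unfolding vaoi_avg_def by simp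
qed

lemma thr_rate_eq:
  assumes "0 < ps" "ps < 1" "0 < pg" "pg < 1"
  shows "thr_rate ps pg k d0 = stationary_rate ps pg k"
  unfolding thr_rate_def using rate_avg_tendsto[OF assms] by (rule limI)

lemma thr_vaoi_eq:
  assumes "0 < ps" "ps < 1" "0 < pg" "pg < 1"
  shows "thr_vaoi ps pg k d0 = stationary_vaoi ps pg k"
  unfolding thr_vaoi_def using vaoi_avg_tendsto[OF assms] by (rule limI)

lemma stationary_rate_pos:
  assumes "0 < ps" "ps < 1" "0 < pg"
  shows "0 < stationary_rate ps pg k"
  using assms by (simp add: stationary_rate_def add_pos_nonneg)

lemma stationary_rate_Suc_less:
  assumes "0 < ps" "ps < 1" "0 < pg" "pg < 1"
  shows "stationary_rate ps pg (Suc k) < stationary_rate ps pg k"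
proof (cases "k = 0")
  case True
  have "pg < ps + pg * (1 - ps)"
    using assms by (simp add: algebra_simps mult_strict_right_mono)
  then show ?thesis
    using True assms by (simp add: stationary_rate_def add_pos_nonneg)
next
  case False
  have "0 < ps * real k + pg * (1 - ps)"
    using False assms by (simp add: add_pos_nonneg)
  moreover have "ps * real k + pg * (1 - ps) < ps * real (Suc k) + pg * (1 - ps)"
    using assms by simp
  ultimately have "pg / (ps * real (Suc k) + pg * (1 - ps)) < pg / (ps * real k + pg * (1 - ps))"
    using assms by (intro divide_strict_left_mono mult_pos_pos) (auto simp: add_pos_nonneg)
  then show ?thesis
    using False by (simp add: stationary_rate_def)
qed

lemma decseq_stationary_rate:
  assumes "0 < ps" "ps < 1" "0 < pg" "pg < 1"
  shows "decseq (stationary_rate ps pg)"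
  using stationary_rate_Suc_less[OF assms] by (intro decseq_SucI less_imp_le)

lemma incseq_stationary_vaoi:
  assumes "0 < ps" "ps < 1" "0 < pg" "pg < 1"
  shows "incseq (stationary_vaoi ps pg)"
proof (rule incseq_SucI)
  fix k
  define e where "e = pg * (1 - ps)"
  have "0 < e"
    using assms by (simp add: e_def)
  have "(real k + 1) * real k * (ps * real k + e) - real k * (real k - 1) * (ps * (real k + 1) + e)
      = real k * (ps * real k + ps + 2 * e)"
    by (simp add: algebra_simps)
  also have "\<dots> \<ge> 0"
    using assms \<open>0 < e\<close> by simp
  moreover have "0 < ps * real k + e" "0 < ps * (real k + 1) + e"
    using assms \<open>0 < e\<close> by (simp_all add: add_nonneg_pos)
  ultimately have "real k * (real k - 1) / (ps * real k + e) \<le> (real k + 1) * real k / (ps * (real k + 1) + e)"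
    by (simp add: divide_simps)
  then have "ps * (real k * (real k - 1) / (ps * real k + e)) / 2
      \<le> ps * ((real k + 1) * real k / (ps * (real k + 1) + e)) / 2"
    using assms by (intro divide_right_mono mult_left_mono) auto
  then show "stationary_vaoi ps pg k \<le> stationary_vaoi ps pg (Suc k)"
    unfolding stationary_vaoi_def e_def[symmetric] by (simp add: field_simps)
qed

lemma stationary_rate_le_iff:
  assumes "0 < ps" "ps < 1" "0 < pg" "pg < 1" "0 < \<alpha>" "1 \<le> k"
  shows "stationary_rate ps pg k \<le> \<alpha> \<longleftrightarrow> pg / ps * (1 / \<alpha> - 1 + ps) \<le> real k"
proof -
  have "0 < ps * real k + pg * (1 - ps)"
    using assms by (simp add: add_pos_nonneg)
  then have "stationary_rate ps pg k \<le> \<alpha> \<longleftrightarrow>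
      pg \<le> \<alpha> * (ps * real k + pg * (1 - ps))"
    using assms by (simp add: stationary_rate_def pos_divide_le_eq mult.commute)
  also have "\<dots> \<longleftrightarrow> pg / ps * (1 / \<alpha> - 1 + ps) \<le> real k"
    using assms by (simp add: field_simps)
  finally show ?thesis .
qed

lemma optimal_threshold_bracket:
  assumes "0 < ps" "ps < 1" "0 < pg" "pg < 1" "0 < \<alpha>" "\<alpha> \<le> 1"
  defines "D \<equiv> nat \<lceil>pg / ps * (1 / \<alpha> - 1 + ps)\<rceil>"
  shows "1 \<le> D \<and> stationary_rate ps pg D \<le> \<alpha> \<and>
    \<alpha> \<le> stationary_rate ps pg (D - 1)"
proof -
  define X where "X = pg / ps * (1 / \<alpha> - 1 + ps)"
  have "1 \<le> 1 / \<alpha>"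
    using assms by simp
  then have "0 < 1 / \<alpha> - 1 + ps"
    using assms by linarith
  then have "0 < X"
    using assms unfolding X_def by simp
  then have "1 \<le> D" "X \<le> real D"
    unfolding D_def X_def[symmetric] by linarith+
  then have "stationary_rate ps pg D \<le> \<alpha>"
    using assms stationary_rate_le_iff by (simp add: X_def)
  moreover have "\<alpha> \<le> stationary_rate ps pg (D - 1)"
  proof (cases "D = 1")
    case True
    then show ?thesis
      using assms by (simp add: stationary_rate_def)
  next
    case False
    then have "1 \<le> D - 1" "real (D - 1) < X"
      using \<open>1 \<le> D\<close> \<open>0 < X\<close> unfolding D_def X_def[symmetric] by linarith+
    then show ?thesis
      using assms stationary_rate_le_iff[of ps pg \<alpha> "D - 1"] by (simp add: X_def)
  qed
  ultimately show ?thesis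
    using \<open>1 \<le> D\<close> by blast
qed

lemma stationary_vaoi_hyperbolic_in_rate:
  assumes "0 < ps" "ps < 1" "0 < pg" "pg < 1"
  obtains A B C where "0 \<le> A"
    "\<And>k. 1 \<le> k \<Longrightarrow>
      stationary_vaoi ps pg k = A / stationary_rate ps pg k + B + C * stationary_rate ps pg k"
proof
  \<comment> \<open>Substitute \<open>k = (pg / R k - e) / ps\<close> into the formula for the average VAoI.\<close>
  define e where "e = pg * (1 - ps)"
  show "0 \<le> pg / (2 * ps)"
    using assms by simp
  fix k :: nat
  assume "1 \<le> k"
  define b where "b = ps * real k + e"
  have "0 < b"
    using assms by (simp add: b_def e_def add_nonneg_pos)
  have R: "stationary_rate ps pg k = pg / b"
    using \<open>1 \<le> k\<close> by (simp add: stationary_rate_def b_def e_def)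
  have k: "real k = (b - e) / ps"
    using assms by (simp add: b_def)
  show "stationary_vaoi ps pg k = pg / (2 * ps) / stationary_rate ps pg k
      + (pg / ps - (2 * e + ps) / (2 * ps)) + e * (e + ps) / (2 * pg * ps) * stationary_rate ps pg k"
    unfolding R stationary_vaoi_def e_def[symmetric] b_def[symmetric] k
    using assms \<open>0 < b\<close> by (simp add: field_simps)
qed

lemma inverse_affine_above_chord:
  fixes A B C x1 x2 x :: real
  defines "f \<equiv> \<lambda>x. A / x + B + C * x"
  assumes "0 \<le> A" "0 < x1" "x1 < x2" "0 < x" "x \<le> x1 \<or> x2 \<le> x"
  shows "f x1 + (f x2 - f x1) / (x2 - x1) * (x - x1) \<le> f x"
proof -
  have "f x - (f x1 + (f x2 - f x1) / (x2 - x1) * (x - x1)) = A * ((x - x1) * (x - x2)) / (x * x1 * x2)"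
    using assms by (simp add: f_def field_simps)
  moreover have "0 \<le> (x - x1) * (x - x2)"
    using assms by (auto intro: mult_nonpos_nonpos)
  then have "0 \<le> A * ((x - x1) * (x - x2)) / (x * x1 * x2)"
    using assms by simp
  ultimately show ?thesis
    by linarith
qed

lemma stationary_vaoi_above_chord:
  assumes "0 < ps" "ps < 1" "0 < pg" "pg < 1" "1 \<le> D"
  defines "R \<equiv> stationary_rate ps pg" and "V \<equiv> stationary_vaoi ps pg"
  shows "V D + (V (D - 1) - V D) / (R (D - 1) - R D) * (R k - R D) \<le> V k"
proof -
  define s where "s = (V (D - 1) - V D) / (R (D - 1) - R D)"
  have R_less: "R D < R (D - 1)"
    using stationary_rate_Suc_less[OF assms(1-4), of "D - 1"] \<open>1 \<le> D\<close> by (simp add: R_def)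
  have "V (D - 1) \<le> V D"
    using incseq_stationary_vaoi[OF assms(1-4)] by (simp add: V_def incseqD)
  then have "s \<le> 0"
    using R_less by (simp add: s_def divide_nonpos_pos)
  have V0: "V 0 = V 1"
    by (simp add: V_def stationary_vaoi_def)
  have above_k1: "V D + s * (R k - R D) \<le> V k" if "1 \<le> k" for k
  proof (cases "D = 1")
    case True
    then have "s = 0"
      by (simp add: s_def V0)
    then show ?thesis
      using True V0 incseqD[OF incseq_stationary_vaoi[OF assms(1-4)] that] by (simp add: V_def)
  next
    case False
    obtain A B C where "0 \<le> A" and curve: "\<And>j. 1 \<le> j \<Longrightarrow> V j = A / R j + B + C * R j"
      using stationary_vaoi_hyperbolic_in_rate[OF assms(1-4)] unfolding R_def V_def by metis
    have "R k \<le> R D \<or> R (D - 1) \<le> R k"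
      using decseq_stationary_rate[OF assms(1-4)] by (cases "D \<le> k") (auto simp: R_def decseqD)
    then show ?thesis
      using inverse_affine_above_chord[OF \<open>0 \<le> A\<close> _ R_less, of "R k" B C]
        False \<open>1 \<le> D\<close> that stationary_rate_pos[OF assms(1-3)]
      by (simp add: s_def curve R_def)
  qed
  have "V D + s * (R 0 - R D) \<le> V D + s * (R 1 - R D)"
    using \<open>s \<le> 0\<close> stationary_rate_Suc_less[OF assms(1-4), of 0]
    by (intro add_left_mono mult_left_mono_neg) (simp_all add: R_def)
  then have "V D + s * (R 0 - R D) \<le> V 0"
    using above_k1[of 1] V0 by simp
  then show ?thesis
    using above_k1 unfolding s_def by (cases "k = 0") simp_all
qed

lemma mixture_above_nonincreasing_line:
  fixes w x v :: "'a \<Rightarrow> real"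
  assumes "finite S" "\<And>k. k \<in> S \<Longrightarrow> 0 \<le> w k" "sum w S = 1"
    "(\<Sum>k\<in>S. w k * x k) \<le> \<alpha>" "s \<le> 0"
    "\<And>k. k \<in> S \<Longrightarrow> v0 + s * (x k - x0) \<le> v k"
  shows "v0 + s * (\<alpha> - x0) \<le> (\<Sum>k\<in>S. w k * v k)"
proof -
  have "v0 + s * (\<alpha> - x0) \<le> v0 + s * ((\<Sum>k\<in>S. w k * x k) - x0)"
    using assms(4,5) by (simp add: mult_left_mono_neg)
  also have "\<dots> = (v0 - s * x0) * sum w S + s * (\<Sum>k\<in>S. w k * x k)"
    using assms(3) by (simp add: algebra_simps)
  also have "\<dots> = (\<Sum>k\<in>S. (v0 - s * x0) * w k + s * (w k * x k))"
    by (simp add: sum.distrib sum_distrib_left)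
  also have "\<dots> = (\<Sum>k\<in>S. w k * (v0 + s * (x k - x0)))"
    by (intro sum.cong) (simp_all add: algebra_simps)
  also have "\<dots> \<le> (\<Sum>k\<in>S. w k * v k)"
    using assms(2,6) by (intro sum_mono mult_left_mono) auto
  finally show ?thesis .
qed

lemma interpolation_weight:
  fixes x1 x2 \<alpha> v1 v2 :: real
  assumes "x1 < x2" "x1 \<le> \<alpha>" "\<alpha> \<le> x2"
  defines "\<gamma> \<equiv> (x2 - \<alpha>) / (x2 - x1)"
  shows "0 \<le> \<gamma>" "\<gamma> \<le> 1" "\<gamma> * x1 + (1 - \<gamma>) * x2 = \<alpha>"
    "\<gamma> * v1 + (1 - \<gamma>) * v2 = v1 + (v2 - v1) / (x2 - x1) * (\<alpha> - x1)"
proof -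
  have "0 < x2 - x1"
    using assms by simp
  have one_minus: "1 - \<gamma> = (\<alpha> - x1) / (x2 - x1)"
    using \<open>0 < x2 - x1\<close> by (simp add: \<gamma>_def field_simps)
  show "0 \<le> \<gamma>"
    using assms by (simp add: \<gamma>_def)
  show "\<gamma> \<le> 1"
    using one_minus assms by simp
  have interpolate: "\<gamma> * u1 + (1 - \<gamma>) * u2 = u1 + (u2 - u1) / (x2 - x1) * (\<alpha> - x1)" for u1 u2
  proof -
    have "(u2 - u1) / (x2 - x1) * (\<alpha> - x1) = (u2 - u1) * (1 - \<gamma>)"
      unfolding one_minus by simp
    then show ?thesis
      by (simp add: algebra_simps)
  qed
  then show "\<gamma> * v1 + (1 - \<gamma>) * v2 = v1 + (v2 - v1) / (x2 - x1) * (\<alpha> - x1)" .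
  show "\<gamma> * x1 + (1 - \<gamma>) * x2 = \<alpha>"
    using interpolate[of x1 x2] \<open>0 < x2 - x1\<close> by simp
qed

lemma optimal_threshold_mixture:
  assumes "0 < ps" "ps < 1" "0 < pg" "pg < 1" "0 < \<alpha>" "\<alpha> \<le> 1"
  defines "R \<equiv> stationary_rate ps pg" and "V \<equiv> stationary_vaoi ps pg"
  defines "D \<equiv> nat \<lceil>pg / ps * (1 / \<alpha> - 1 + ps)\<rceil>"
  defines "\<gamma> \<equiv> (R (D - 1) - \<alpha>) / (R (D - 1) - R D)"
  shows "1 \<le> D \<and> 0 \<le> \<gamma> \<and> \<gamma> \<le> 1 \<and> \<gamma> * R D + (1 - \<gamma>) * R (D - 1) = \<alpha> \<and>
    (\<forall>(S::nat set) w. finite S \<and> (\<forall>k\<in>S. 0 \<le> w k) \<and> sum w S = 1 \<and>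
      (\<Sum>k\<in>S. w k * R k) \<le> \<alpha> \<longrightarrow>
      \<gamma> * V D + (1 - \<gamma>) * V (D - 1) \<le> (\<Sum>k\<in>S. w k * V k))"
proof -
  note probs = assms(1-4)
  have bracket: "1 \<le> D" "R D \<le> \<alpha>" "\<alpha> \<le> R (D - 1)"
    using optimal_threshold_bracket[OF assms(1-6)] by (simp_all add: D_def R_def)
  moreover have "R D < R (D - 1)"
    using stationary_rate_Suc_less[OF probs, of "D - 1"] bracket(1) by (simp add: R_def)
  ultimately have \<gamma>: "0 \<le> \<gamma>" "\<gamma> \<le> 1" "\<gamma> * R D + (1 - \<gamma>) * R (D - 1) = \<alpha>"
      "\<gamma> * V D + (1 - \<gamma>) * V (D - 1) =
         V D + (V (D - 1) - V D) / (R (D - 1) - R D) * (\<alpha> - R D)"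
    using interpolation_weight[of "R D" "R (D - 1)" \<alpha>] unfolding \<gamma>_def by blast+
  have slope: "(V (D - 1) - V D) / (R (D - 1) - R D) \<le> 0"
    using \<open>R D < R (D - 1)\<close> incseqD[OF incseq_stationary_vaoi[OF probs], of "D - 1" D]
    by (simp add: V_def divide_nonpos_pos)
  have "\<gamma> * V D + (1 - \<gamma>) * V (D - 1) \<le> (\<Sum>k\<in>S. w k * V k)"
    if "finite S" "\<forall>k\<in>S. 0 \<le> w k" "sum w S = 1" "(\<Sum>k\<in>S. w k * R k) \<le> \<alpha>"
    for S :: "nat set" and w
    unfolding \<gamma>(4)
    by (rule mixture_above_nonincreasing_line[OF _ _ _ _ slope
          stationary_vaoi_above_chord[OF probs bracket(1), folded R_def V_def]]) (use that in auto)
  then show ?thesis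
    using bracket(1) \<gamma>(1-3) by blast
qed

theorem theorem1:
  fixes ps pg \<alpha> :: real and d0 :: nat
  assumes "0 < ps" "ps < 1" "0 < pg" "pg < 1" "0 < \<alpha>" "\<alpha> \<le> 1"
  defines "\<beta> \<equiv> 1 - (1 - ps) * (1 - pg)"
  defines "R \<equiv> (\<lambda>k::nat. if k = 0 then 1 else pg / ((real k - 1) * ps + \<beta>))"
  defines "Dstar \<equiv> nat \<lceil>pg / ps * (1 / \<alpha> - 1 + ps)\<rceil>"
  defines "\<gamma> \<equiv> (R (Dstar - 1) - \<alpha>) / (R (Dstar - 1) - R Dstar)"
  shows
    "(\<forall>k. rate_avg ps pg k d0 \<longlonglongrightarrow> R k) \<and>
     (\<forall>k. convergent (vaoi_avg ps pg k d0)) \<and>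
     1 \<le> Dstar \<and> 0 \<le> \<gamma> \<and> \<gamma> \<le> 1 \<and>
     \<gamma> * thr_rate ps pg Dstar d0 + (1 - \<gamma>) * thr_rate ps pg (Dstar - 1) d0 \<le> \<alpha> \<and>
     (\<forall>(S::nat set) (w::nat \<Rightarrow> real).
        finite S \<and> (\<forall>k\<in>S. 0 \<le> w k) \<and> sum w S = 1 \<and>
        (\<Sum>k\<in>S. w k * thr_rate ps pg k d0) \<le> \<alpha> \<longrightarrow>
        \<gamma> * thr_vaoi ps pg Dstar d0 + (1 - \<gamma>) * thr_vaoi ps pg (Dstar - 1) d0
          \<le> (\<Sum>k\<in>S. w k * thr_vaoi ps pg k d0))"
proof -
  note probs = assms(1-4)
  have R_eq: "R = stationary_rate ps pg"
    by (auto simp: R_def \<beta>_def stationary_rate_def algebra_simps)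
  have "convergent (vaoi_avg ps pg k d0)" for k
    using vaoi_avg_tendsto[OF probs] by (rule convergentI)
  then show ?thesis
    unfolding thr_rate_eq[OF probs] thr_vaoi_eq[OF probs] \<gamma>_def Dstar_def R_eq
    using rate_avg_tendsto[OF probs] optimal_threshold_mixture[OF assms(1-6)] by auto
qed

end
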